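(* Let $n$ be odd. The permutation representation of $S_n$ over $\mathbb{C}$ arising from the action of $S_n$ (by $\pi\cdot S=\pi(S)$) on the set of even-sized subsets of $\{1,\dots,n\}$ does not unite conjugacy classes.
   Context: A representation $T$ of $G$ unites conjugacy classes if there are non-conjugate $\sigma,\tau\in G$ with $T(\sigma),T(\tau)$ similar matrices. *)

theory Defs
  imports Complex_Main "HOL-Combinatorics.Permutations"
begin

text \<open>Square complex matrices whose rows and columns are indexed by a finite set X,
  represented as functions X => X => complex (entries outside X are irrelevant).\<close>

definition mat_mult_on :: "'i set \<Rightarrow> ('i \<Rightarrow> 'i \<Rightarrow> complex) \<Rightarrow> ('i \<Rightarrow> 'i \<Rightarrow> complex) \<Rightarrow> ('i \<Rightarrow> 'i \<Rightarrow> complex)" where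
  "mat_mult_on X A B = (\<lambda>i j. \<Sum>k\<in>X. A i k * B k j)"

definition mat_id_on :: "'i set \<Rightarrow> 'i \<Rightarrow> 'i \<Rightarrow> complex" where
  "mat_id_on X = (\<lambda>i j. if i = j then 1 else 0)"

definition mat_eq_on :: "'i set \<Rightarrow> ('i \<Rightarrow> 'i \<Rightarrow> complex) \<Rightarrow> ('i \<Rightarrow> 'i \<Rightarrow> complex) \<Rightarrow> bool" where
  "mat_eq_on X A B \<longleftrightarrow> (\<forall>i\<in>X. \<forall>j\<in>X. A i j = B i j)"

definition similar_on :: "'i set \<Rightarrow> ('i \<Rightarrow> 'i \<Rightarrow> complex) \<Rightarrow> ('i \<Rightarrow> 'i \<Rightarrow> complex) \<Rightarrow> bool" where
  "similar_on X A B \<longleftrightarrow> (\<exists>P Q.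
      mat_eq_on X (mat_mult_on X P Q) (mat_id_on X) \<and>
      mat_eq_on X (mat_mult_on X Q P) (mat_id_on X) \<and>
      mat_eq_on X (mat_mult_on X (mat_mult_on X P A) Q) B)"

definition conj_Sn :: "nat \<Rightarrow> (nat \<Rightarrow> nat) \<Rightarrow> (nat \<Rightarrow> nat) \<Rightarrow> bool" where
  "conj_Sn n \<sigma> \<tau> \<longleftrightarrow> (\<exists>g. g permutes {1..n} \<and> \<tau> = g \<circ> \<sigma> \<circ> inv g)"

definition unites_conj_classes :: "nat \<Rightarrow> 'i set \<Rightarrow> ((nat \<Rightarrow> nat) \<Rightarrow> 'i \<Rightarrow> 'i \<Rightarrow> complex) \<Rightarrow> bool" where
  "unites_conj_classes n X T \<longleftrightarrow> (\<exists>\<sigma> \<tau>. \<sigma> permutes {1..n} \<and> \<tau> permutes {1..n} \<and>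
      \<not> conj_Sn n \<sigma> \<tau> \<and> similar_on X (T \<sigma>) (T \<tau>))"

definition even_subsets :: "nat \<Rightarrow> nat set set" where
  "even_subsets n = {S. S \<subseteq> {1..n} \<and> even (card S)}"

definition even_subset_rep :: "(nat \<Rightarrow> nat) \<Rightarrow> nat set \<Rightarrow> nat set \<Rightarrow> complex" where
  "even_subset_rep \<pi> = (\<lambda>S R. if S = \<pi> ` R then 1 else 0)"

end

(*
  Similar matrices have equal traces of all powers, and the trace of the k-th power of the
  permutation matrix of \<sigma> counts the even-sized subsets fixed by \<sigma>^k.  As n is odd,
  complementation exchanges fixed sets of even and odd size, so this count is half the number
  2^c of all fixed subsets, c being the number of cycles of \<sigma>^k.  A cycle of length d of \<sigma>
  splits into gcd d k cycles of \<sigma>^k, so the representation determines the sums of gcd d k over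
  the cycle lengths d of \<sigma>, for every k > 0.  Since gcd d k is the sum of totient m over the
  common divisors m, Moebius-style inversion recovers, for every m, the number of cycles whose
  length is a multiple of m, and from these the cycle type.  Permutations of equal cycle type
  are conjugate.
*)
theory Submission
  imports Defs "HOL-Combinatorics.Orbits" "HOL-Combinatorics.Cycles"
    "HOL-Library.Multiset" "HOL-Number_Theory.Totient"
begin

section \<open>Matrices indexed by a finite set\<close>


definition mat_trace_on :: "'i set \<Rightarrow> ('i \<Rightarrow> 'i \<Rightarrow> complex) \<Rightarrow> complex" where
  "mat_trace_on X A = (\<Sum>i\<in>X. A i i)"

fun mat_pow_on :: "'i set \<Rightarrow> ('i \<Rightarrow> 'i \<Rightarrow> complex) \<Rightarrow> nat \<Rightarrow> 'i \<Rightarrow> 'i \<Rightarrow> complex" where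
  "mat_pow_on X A 0 = mat_id_on X"
| "mat_pow_on X A (Suc k) = mat_mult_on X A (mat_pow_on X A k)"

lemma mat_eq_on_refl [simp]: "mat_eq_on X A A"
  by (simp add: mat_eq_on_def)

lemma mat_eq_on_sym: "mat_eq_on X A B \<Longrightarrow> mat_eq_on X B A"
  by (simp add: mat_eq_on_def)

lemma mat_eq_on_trans [trans]: "mat_eq_on X A B \<Longrightarrow> mat_eq_on X B C \<Longrightarrow> mat_eq_on X A C"
  by (simp add: mat_eq_on_def)

lemma mat_mult_on_assoc:
  "mat_mult_on X (mat_mult_on X A B) C = mat_mult_on X A (mat_mult_on X B C)"
  unfolding mat_mult_on_def
  by (auto simp: sum_distrib_left sum_distrib_right mult.assoc intro!: ext) (rule sum.swap)

lemma mat_mult_on_cong: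
  "mat_eq_on X A A' \<Longrightarrow> mat_eq_on X B B' \<Longrightarrow>
    mat_eq_on X (mat_mult_on X A B) (mat_mult_on X A' B')"
  unfolding mat_eq_on_def mat_mult_on_def by (auto intro!: sum.cong)

lemma mat_mult_on_id_left: "finite X \<Longrightarrow> mat_eq_on X (mat_mult_on X (mat_id_on X) A) A"
  by (simp add: mat_eq_on_def mat_mult_on_def mat_id_on_def if_distrib[where f = "\<lambda>x. x * _"]
      cong: if_cong)

lemma mat_mult_on_id_right: "finite X \<Longrightarrow> mat_eq_on X (mat_mult_on X A (mat_id_on X)) A"
  by (simp add: mat_eq_on_def mat_mult_on_def mat_id_on_def if_distrib[where f = "\<lambda>x. _ * x"]
      cong: if_cong)

lemma mat_pow_on_cong: "mat_eq_on X A B \<Longrightarrow> mat_eq_on X (mat_pow_on X A k) (mat_pow_on X B k)"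
  by (induction k) (simp_all add: mat_mult_on_cong)

lemma mat_trace_on_cong: "mat_eq_on X A B \<Longrightarrow> mat_trace_on X A = mat_trace_on X B"
  by (simp add: mat_eq_on_def mat_trace_on_def)

lemma mat_trace_on_mult_commute:
  "mat_trace_on X (mat_mult_on X A B) = mat_trace_on X (mat_mult_on X B A)"
  unfolding mat_trace_on_def mat_mult_on_def by (subst sum.swap) (simp add: mult.commute)

lemma mat_pow_on_conjugate:
  assumes "finite X"
    and PQ: "mat_eq_on X (mat_mult_on X P Q) (mat_id_on X)"
    and QP: "mat_eq_on X (mat_mult_on X Q P) (mat_id_on X)"
  shows "mat_eq_on X (mat_pow_on X (mat_mult_on X (mat_mult_on X P A) Q) k)
           (mat_mult_on X (mat_mult_on X P (mat_pow_on X A k)) Q)"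
proof (induction k)
  case 0
  have "mat_eq_on X (mat_mult_on X (mat_mult_on X P (mat_id_on X)) Q) (mat_mult_on X P Q)"
    using mat_mult_on_cong[OF mat_mult_on_id_right[OF \<open>finite X\<close>] mat_eq_on_refl] .
  from mat_eq_on_trans[OF this PQ] show ?case by (simp add: mat_eq_on_sym)
next
  case (Suc k)
  let ?M = "mat_mult_on X (mat_mult_on X P A) Q" and ?Ak = "mat_pow_on X A k"
  have "mat_eq_on X (mat_pow_on X ?M (Suc k)) (mat_mult_on X ?M (mat_mult_on X (mat_mult_on X P ?Ak) Q))"
    unfolding mat_pow_on.simps by (rule mat_mult_on_cong[OF mat_eq_on_refl Suc.IH])
  also have "\<dots> = mat_mult_on X P (mat_mult_on X A
      (mat_mult_on X (mat_mult_on X Q P) (mat_mult_on X ?Ak Q)))"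
    by (simp add: mat_mult_on_assoc)
  also have "mat_eq_on X \<dots> (mat_mult_on X P (mat_mult_on X A
      (mat_mult_on X (mat_id_on X) (mat_mult_on X ?Ak Q))))"
    by (intro mat_mult_on_cong mat_eq_on_refl QP)
  also have "mat_eq_on X \<dots> (mat_mult_on X P (mat_mult_on X A (mat_mult_on X ?Ak Q)))"
    by (intro mat_mult_on_cong mat_eq_on_refl mat_mult_on_id_left \<open>finite X\<close>)
  also have "\<dots> = mat_mult_on X (mat_mult_on X P (mat_pow_on X A (Suc k))) Q"
    by (simp add: mat_mult_on_assoc)
  finally show ?case .
qed

lemma similar_on_trace_pow:
  assumes "finite X" "similar_on X A B"
  shows "mat_trace_on X (mat_pow_on X A k) = mat_trace_on X (mat_pow_on X B k)"
proof -
  obtain P Q where PQ: "mat_eq_on X (mat_mult_on X P Q) (mat_id_on X)"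
    and QP: "mat_eq_on X (mat_mult_on X Q P) (mat_id_on X)"
    and B: "mat_eq_on X (mat_mult_on X (mat_mult_on X P A) Q) B"
    using assms(2) unfolding similar_on_def by blast
  have "mat_eq_on X (mat_pow_on X B k) (mat_mult_on X (mat_mult_on X P (mat_pow_on X A k)) Q)"
    using mat_eq_on_sym[OF mat_pow_on_cong[OF B]] mat_pow_on_conjugate[OF assms(1) PQ QP]
    by (rule mat_eq_on_trans)
  then have "mat_trace_on X (mat_pow_on X B k)
      = mat_trace_on X (mat_mult_on X (mat_mult_on X P (mat_pow_on X A k)) Q)"
    by (rule mat_trace_on_cong)
  also have "\<dots> = mat_trace_on X (mat_mult_on X (mat_mult_on X Q P) (mat_pow_on X A k))"
    by (subst mat_trace_on_mult_commute) (simp add: mat_mult_on_assoc)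
  also have "\<dots> = mat_trace_on X (mat_pow_on X A k)"
    by (rule mat_trace_on_cong[OF mat_eq_on_trans[OF mat_mult_on_cong[OF QP mat_eq_on_refl]
          mat_mult_on_id_left[OF assms(1)]]])
  finally show ?thesis by (rule sym)
qed

section \<open>The permutation representation on even-sized subsets\<close>

lemma even_subset_rep_mult:
  assumes "finite X" "\<And>R. R \<in> X \<Longrightarrow> q ` R \<in> X"
  shows "mat_eq_on X (mat_mult_on X (even_subset_rep p) (even_subset_rep q)) (even_subset_rep (p \<circ> q))"
  using assms
  by (simp add: mat_eq_on_def mat_mult_on_def even_subset_rep_def image_comp
      if_distrib[where f = "\<lambda>x. _ * x"] cong: if_cong)

lemma mat_pow_on_even_subset_rep:
  assumes "finite X" and closed: "\<And>R. R \<in> X \<Longrightarrow> p ` R \<in> X"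
  shows "mat_eq_on X (mat_pow_on X (even_subset_rep p) k) (even_subset_rep (p ^^ k))"
proof -
  have powers_closed: "(p ^^ j) ` R \<in> X" if "R \<in> X" for R j
    using that closed by (induction j) (simp_all, metis image_image)
  show ?thesis
  proof (induction k)
    case 0
    show ?case by (simp add: mat_eq_on_def mat_id_on_def even_subset_rep_def)
  next
    case (Suc k)
    have "mat_eq_on X (mat_pow_on X (even_subset_rep p) (Suc k))
        (mat_mult_on X (even_subset_rep p) (even_subset_rep (p ^^ k)))"
      using Suc.IH by (simp add: mat_mult_on_cong)
    also have "mat_eq_on X \<dots> (even_subset_rep (p \<circ> p ^^ k))"
      using even_subset_rep_mult[OF \<open>finite X\<close>] powers_closed by blast
    finally show ?case by (simp only: funpow.simps(2))
  qed
qed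

lemma mat_trace_on_even_subset_rep:
  "finite X \<Longrightarrow> mat_trace_on X (even_subset_rep p) = card {S \<in> X. p ` S = S}"
  by (simp add: mat_trace_on_def even_subset_rep_def sum.If_cases Int_def eq_commute[of _ "p ` _"])

lemma finite_even_subsets: "finite (even_subsets n)"
  unfolding even_subsets_def by (rule finite_subset[of _ "Pow {1..n}"]) auto

lemma permutes_image_in_even_subsets:
  assumes "p permutes {1..n}" "R \<in> even_subsets n"
  shows "p ` R \<in> even_subsets n"
  using assms permutes_image[OF assms(1)] card_image[OF inj_on_subset[OF permutes_inj[OF assms(1)]]]
  unfolding even_subsets_def by auto

definition invariant_subsets :: "('a \<Rightarrow> 'a) \<Rightarrow> 'a set \<Rightarrow> 'a set set" where
  "invariant_subsets p A = {S. S \<subseteq> A \<and> p ` S = S}"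

lemma card_even_invariant_subsets:
  assumes p: "p permutes A" and "finite A" "odd (card A)"
  shows "2 * card {S \<in> invariant_subsets p A. even (card S)} = card (invariant_subsets p A)"
proof -
  define Evens where "Evens = {S \<in> invariant_subsets p A. even (card S)}"
  define Odds where "Odds = {S \<in> invariant_subsets p A. odd (card S)}"
  have complement_invariant: "A - S \<in> invariant_subsets p A" if "S \<in> invariant_subsets p A" for S
    using that permutes_image[OF p] image_set_diff[OF permutes_inj[OF p]]
    unfolding invariant_subsets_def by auto
  have parity_complement: "even (card (A - S)) \<longleftrightarrow> odd (card S)"
    if "S \<in> invariant_subsets p A" for S
  proof -
    have "card (A - S) = card A - card S" "card S \<le> card A"
      using that \<open>finite A\<close> by (auto simp: invariant_subsets_def card_Diff_subset card_mono finite_subset)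
    then show ?thesis using \<open>odd (card A)\<close> by (simp add: even_diff_nat)
  qed
  have complement_complement: "A - (A - S) = S" if "S \<in> invariant_subsets p A" for S
    using that by (auto simp: invariant_subsets_def)
  have "bij_betw (\<lambda>S. A - S) Evens Odds"
    by (rule bij_betw_byWitness[where f' = "\<lambda>S. A - S"])
      (auto simp: Evens_def Odds_def complement_complement complement_invariant parity_complement)
  then have "card Evens = card Odds" by (rule bij_betw_same_card)
  moreover have "invariant_subsets p A = Evens \<union> Odds" "Evens \<inter> Odds = {}"
    by (auto simp: Evens_def Odds_def)
  moreover have "finite (invariant_subsets p A)"
    using \<open>finite A\<close> by (simp add: invariant_subsets_def)
  ultimately have "card (invariant_subsets p A) = 2 * card Evens"
    by (simp add: card_Un_disjoint)
  then show ?thesis by (simp add: Evens_def)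
qed

section \<open>Orbits\<close>

definition orbits :: "('a \<Rightarrow> 'a) \<Rightarrow> 'a set \<Rightarrow> 'a set set" where
  "orbits p A = orbit p ` A"

lemma orbit_eq_if_mem: "permutation p \<Longrightarrow> y \<in> orbit p x \<Longrightarrow> orbit p y = orbit p x"
  by (rule orbit_cyclic_eq3[OF cyclic_on_orbit'])

lemma orbit_subset_if_image_subset:
  assumes "p ` A \<subseteq> A" "x \<in> A"
  shows "orbit p x \<subseteq> A"
proof
  fix y assume "y \<in> orbit p x"
  then show "y \<in> A" by induction (use assms in auto)
qed

lemma image_orbit: "permutation p \<Longrightarrow> p ` orbit p x = orbit p x"
  using orbit_inverse[of x p p p] by (simp add: permutation_self_in_orbit permutation_orbit_step)

lemma card_orbit: "permutation p \<Longrightarrow> card (orbit p x) = least_power p x"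
  using support_set[of p x] distinct_card[OF cycle_of_permutation[of p x]]
  by (simp add: orbit_altdef_permutation full_SetCompr_eq)

lemma card_orbit_pos: "permutation p \<Longrightarrow> card (orbit p x) > 0"
  by (simp add: card_orbit least_power_of_permutation(2))

lemma funpow_eq_funpow_iff:
  assumes "permutation p"
  shows "(p ^^ i) x = (p ^^ j) x \<longleftrightarrow> i mod least_power p x = j mod least_power p x"
proof -
  have *: "(p ^^ i) x = (p ^^ j) x \<longleftrightarrow> i mod least_power p x = j mod least_power p x"
    if "i \<le> j" for i j
  proof -
    have "(p ^^ j) x = (p ^^ i) ((p ^^ (j - i)) x)"
      using that by (metis funpow_add comp_apply le_add_diff_inverse)
    then have "(p ^^ i) x = (p ^^ j) x \<longleftrightarrow> (p ^^ (j - i)) x = x"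
      using inj_fn[OF bij_is_inj[OF permutation_bijective[OF assms]]] by (metis injD)
    also have "\<dots> \<longleftrightarrow> least_power p x dvd j - i"
      by (simp add: least_power_dvd[OF assms])
    finally show ?thesis using mod_eq_dvd_iff_nat[OF that] by (simp add: eq_commute)
  qed
  show ?thesis
    using *[of i j] *[of j i] by (cases "i \<le> j") auto
qed

lemma least_power_funpow:
  assumes "permutation p"
  shows "least_power (p ^^ k) x = least_power p x div gcd (least_power p x) k"
proof -
  define L where "L = least_power p x"
  define g where "g = gcd L k"
  have "L > 0" unfolding L_def by (rule least_power_of_permutation(2)[OF assms])
  then have "g > 0" by (simp add: g_def)
  have "coprime (L div g) (k div g)"
    using div_gcd_coprime[of L k] \<open>L > 0\<close> by (simp add: g_def)
  have "g * (L div g) = L" "g * (k div g) = k"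
    by (simp_all add: g_def)
  have dvd_iff: "least_power (p ^^ k) x dvd m \<longleftrightarrow> L div g dvd m" for m
  proof -
    have "least_power (p ^^ k) x dvd m \<longleftrightarrow> (p ^^ (k * m)) x = x"
      by (simp add: least_power_dvd permutation_funpow assms funpow_mult)
    also have "\<dots> \<longleftrightarrow> L dvd k * m"
      by (simp add: least_power_dvd[OF assms] L_def)
    also have "\<dots> \<longleftrightarrow> g * (L div g) dvd g * ((k div g) * m)"
      using \<open>g * (L div g) = L\<close> \<open>g * (k div g) = k\<close> by (metis mult.assoc)
    also have "\<dots> \<longleftrightarrow> L div g dvd m"
      using \<open>g > 0\<close> \<open>coprime (L div g) (k div g)\<close> by (simp add: coprime_dvd_mult_right_iff)
    finally show ?thesis .
  qed
  show ?thesis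
    using dvd_iff[of "least_power (p ^^ k) x"] dvd_iff[of "L div g"]
    by (simp add: dvd_antisym L_def g_def)
qed

lemma sum_over_orbits:
  fixes h :: "'a set \<Rightarrow> real"
  assumes p: "permutation p" and "p ` A \<subseteq> A" "finite A"
  shows "(\<Sum>x\<in>A. h (orbit p x) / card (orbit p x)) = (\<Sum>C\<in>orbits p A. h C)"
proof -
  have "(\<Sum>x\<in>A. h (orbit p x) / card (orbit p x))
      = (\<Sum>C\<in>orbits p A. \<Sum>x\<in>{x \<in> A. orbit p x = C}. h (orbit p x) / card (orbit p x))"
    by (rule sum.group[symmetric]) (use \<open>finite A\<close> in \<open>auto simp: orbits_def\<close>)
  also have "\<dots> = (\<Sum>C\<in>orbits p A. h C)"
  proof (rule sum.cong[OF refl])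
    fix C assume "C \<in> orbits p A"
    then obtain y where "y \<in> A" "C = orbit p y" by (auto simp: orbits_def)
    have orbit_C: "orbit p x = C" if "x \<in> C" for x
      using that orbit_eq_if_mem[OF p] \<open>C = orbit p y\<close> by blast
    have "{x \<in> A. orbit p x = C} = C"
      using orbit_C orbit_subset_if_image_subset[OF \<open>p ` A \<subseteq> A\<close> \<open>y \<in> A\<close>]
        permutation_self_in_orbit[OF p] \<open>C = orbit p y\<close> by blast
    moreover have "card C > 0"
      using \<open>C = orbit p y\<close> card_orbit_pos[OF p] by simp
    ultimately show "(\<Sum>x\<in>{x \<in> A. orbit p x = C}. h (orbit p x) / card (orbit p x)) = h C"
      by (simp add: orbit_C)
  qed
  finally show ?thesis .
qed

lemma funpow_image_subset: "p ` A \<subseteq> A \<Longrightarrow> (p ^^ k) ` A \<subseteq> A"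
  by (induction k) auto

lemma card_orbits_funpow:
  assumes p: "permutation p" and "p ` A \<subseteq> A" "finite A"
  shows "card (orbits (p ^^ k) A) = (\<Sum>C\<in>orbits p A. gcd (card C) k)"
proof -
  \<comment> \<open>Count orbits by giving every point the weight 1 / (length of its orbit).\<close>
  have "real (card (orbits (p ^^ k) A)) = (\<Sum>x\<in>A. 1 / card (orbit (p ^^ k) x))"
    using sum_over_orbits[OF permutation_funpow[OF p] funpow_image_subset \<open>finite A\<close>, of "\<lambda>_. 1"]
      \<open>p ` A \<subseteq> A\<close> by simp
  also have "\<dots> = (\<Sum>x\<in>A. gcd (card (orbit p x)) k / card (orbit p x))"
  proof (rule sum.cong[OF refl])
    fix x
    define L where "L = least_power p x"
    have "L > 0" unfolding L_def by (rule least_power_of_permutation(2)[OF p])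
    have "real (card (orbit (p ^^ k) x)) = real L / gcd L k"
      by (simp add: card_orbit permutation_funpow[OF p] least_power_funpow[OF p] real_of_nat_div
          flip: L_def)
    then show "1 / card (orbit (p ^^ k) x) = gcd (card (orbit p x)) k / card (orbit p x)"
      using \<open>L > 0\<close> by (simp add: card_orbit[OF p] flip: L_def)
  qed
  also have "\<dots> = (\<Sum>C\<in>orbits p A. gcd (card C) k)"
    using sum_over_orbits[OF assms, of "\<lambda>C. gcd (card C) k"] by simp
  finally show ?thesis by linarith
qed

lemma card_invariant_subsets:
  assumes p: "permutation p" and "p ` A \<subseteq> A" "finite A"
  shows "card (invariant_subsets p A) = 2 ^ card (orbits p A)"
proof -
  have "bij_betw (image (orbit p)) (invariant_subsets p A) (Pow (orbits p A))"
  proof (rule bij_betw_byWitness[where f' = Union])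
    show "\<forall>S\<in>invariant_subsets p A. \<Union> (orbit p ` S) = S"
    proof (intro ballI equalityI)
      fix S assume "S \<in> invariant_subsets p A"
      then show "\<Union> (orbit p ` S) \<subseteq> S"
        using orbit_subset_if_image_subset[of p S] by (auto simp: invariant_subsets_def)
      show "S \<subseteq> \<Union> (orbit p ` S)"
        using permutation_self_in_orbit[OF p] by blast
    qed
    show "\<forall>T\<in>Pow (orbits p A). orbit p ` \<Union> T = T"
    proof (intro ballI equalityI)
      fix T assume "T \<in> Pow (orbits p A)"
      then show "orbit p ` \<Union> T \<subseteq> T"
        using orbit_eq_if_mem[OF p] by (auto simp: orbits_def)
      show "T \<subseteq> orbit p ` \<Union> T"
      proof
        fix C assume "C \<in> T"
        with \<open>T \<in> Pow (orbits p A)\<close> obtain y where "C = orbit p y"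
          by (auto simp: orbits_def)
        then show "C \<in> orbit p ` \<Union> T"
          using \<open>C \<in> T\<close> permutation_self_in_orbit[OF p] by blast
      qed
    qed
    show "image (orbit p) ` invariant_subsets p A \<subseteq> Pow (orbits p A)"
      by (auto simp: invariant_subsets_def orbits_def)
    have "C \<subseteq> A" "p ` C = C" if "C \<in> orbits p A" for C
      using that orbit_subset_if_image_subset[OF \<open>p ` A \<subseteq> A\<close>]
      by (auto simp: orbits_def image_orbit[OF p] intro: orbit.step)
    then show "Union ` Pow (orbits p A) \<subseteq> invariant_subsets p A"
      unfolding invariant_subsets_def image_Union by blast
  qed
  then have "card (invariant_subsets p A) = card (Pow (orbits p A))"
    by (rule bij_betw_same_card)
  then show ?thesis by (simp add: card_Pow orbits_def \<open>finite A\<close>)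
qed

section \<open>A multiset of positive integers is determined by its gcd sums\<close>

definition count_multiples :: "nat multiset \<Rightarrow> nat \<Rightarrow> nat" where
  "count_multiples M m = size {#d \<in># M. m dvd d#}"

lemma count_multiples_add_mset [simp]:
  "count_multiples (add_mset d M) m = (if m dvd d then 1 else 0) + count_multiples M m"
  by (simp add: count_multiples_def)

lemma count_multiples_empty [simp]: "count_multiples {#} m = 0"
  by (simp add: count_multiples_def)

lemma count_multiples_pos_iff: "count_multiples M m > 0 \<longleftrightarrow> (\<exists>d\<in>#M. m dvd d)"
  by (auto simp: count_multiples_def filter_mset_eq_mempty_iff zero_less_iff_neq_zero)

lemma count_multiples_1: "count_multiples M 1 = size M"
  by (simp add: count_multiples_def)

lemma gcd_eq_sum_totient:
  fixes d k :: nat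
  assumes "k > 0"
  shows "gcd d k = (\<Sum>m | m dvd k. if m dvd d then totient m else 0)"
proof -
  have "gcd d k = (\<Sum>m | m dvd gcd d k. totient m)"
    by (rule totient_divisor_sum[symmetric])
  also have "\<dots> = (\<Sum>m | m dvd k. if m dvd d then totient m else 0)"
    using \<open>k > 0\<close> by (simp add: sum.If_cases Int_def conj_commute)
  finally show ?thesis .
qed

lemma sum_mset_gcd_eq_sum_totient:
  assumes "k > 0"
  shows "(\<Sum>d\<in>#M. gcd d k) = (\<Sum>m | m dvd k. totient m * count_multiples M m)"
proof (induction M)
  case (add d M)
  then show ?case
    by (auto simp: gcd_eq_sum_totient[OF assms, of d] simp flip: sum.distrib intro!: sum.cong)
qed simp

lemma count_multiples_eq_if_sum_gcd_eq:
  assumes sums: "\<And>k. k > 0 \<Longrightarrow> (\<Sum>d\<in>#M. gcd d k) = (\<Sum>d\<in>#N. gcd d k)"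
  shows "m > 0 \<Longrightarrow> count_multiples M m = count_multiples N m"
proof (induction m rule: less_induct)
  case (less m)
  let ?D = "{j. j dvd m} - {m}"
  have sum_split: "(\<Sum>j | j dvd m. totient j * count_multiples K j)
      = totient m * count_multiples K m + (\<Sum>j\<in>?D. totient j * count_multiples K j)" for K
    using \<open>m > 0\<close> by (intro sum.remove) auto
  have "(\<Sum>j\<in>?D. totient j * count_multiples M j) = (\<Sum>j\<in>?D. totient j * count_multiples N j)"
  proof (rule sum.cong[OF refl])
    fix j assume "j \<in> ?D"
    then have "0 < j" "j < m" using \<open>m > 0\<close> by (auto intro: Nat.gr0I dest: dvd_imp_le)
    then show "totient j * count_multiples M j = totient j * count_multiples N j"
      using less.IH by simp
  qed
  moreover have "(\<Sum>j | j dvd m. totient j * count_multiples M j)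
      = (\<Sum>j | j dvd m. totient j * count_multiples N j)"
    using sums[OF \<open>m > 0\<close>] by (simp add: sum_mset_gcd_eq_sum_totient[OF \<open>m > 0\<close>])
  ultimately have "totient m * count_multiples M m = totient m * count_multiples N m"
    using sum_split[of M] sum_split[of N] by linarith
  then show ?case using less.prems by simp
qed

lemma Max_mset_le_if_count_multiples_eq:
  assumes "0 \<notin># N" "M \<noteq> {#}" "\<And>m. m > 0 \<Longrightarrow> count_multiples M m = count_multiples N m"
  shows "Max_mset M \<le> Max_mset N"
proof (cases "Max_mset M = 0")
  case False
  have "Max_mset M \<in># M" using \<open>M \<noteq> {#}\<close> by (rule Max_in_mset)
  then have "count_multiples M (Max_mset M) > 0"
    unfolding count_multiples_pos_iff using dvd_refl by blast
  then have "count_multiples N (Max_mset M) > 0"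
    using assms(3) False by simp
  then obtain e where "e \<in># N" "Max_mset M dvd e"
    by (auto simp: count_multiples_pos_iff)
  moreover from this have "e > 0" using \<open>0 \<notin># N\<close> by (metis neq0_conv)
  ultimately have "Max_mset M \<le> e" "e \<le> Max_mset N"
    by (auto intro: dvd_imp_le)
  then show ?thesis by (rule order_trans)
qed simp

lemma multiset_eq_if_count_multiples_eq:
  assumes "0 \<notin># M" "0 \<notin># N" "\<And>m. m > 0 \<Longrightarrow> count_multiples M m = count_multiples N m"
  shows "M = N"
  using assms
proof (induction "size M" arbitrary: M N rule: less_induct)
  case less
  have "size M = size N"
    using less.prems(3)[of 1] unfolding count_multiples_1 by simp
  show ?case
  proof (cases "M = {#}")
    case False
    then have "N \<noteq> {#}" using \<open>size M = size N\<close> by auto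
    define L where "L = Max_mset M"
    have "L \<le> Max_mset N"
      unfolding L_def by (rule Max_mset_le_if_count_multiples_eq) (use less.prems False in simp_all)
    moreover have "Max_mset N \<le> L"
      unfolding L_def by (rule Max_mset_le_if_count_multiples_eq) (use less.prems \<open>N \<noteq> {#}\<close> in simp_all)
    ultimately have "L \<in># N"
      using Max_in_mset[OF \<open>N \<noteq> {#}\<close>] by simp
    moreover have "L \<in># M"
      unfolding L_def using False by (rule Max_in_mset)
    ultimately obtain M' N' where "M = add_mset L M'" "N = add_mset L N'"
      by (metis multi_member_split)
    moreover have "M' = N'"
    proof (rule less.hyps)
      show "size M' < size M" "0 \<notin># M'" "0 \<notin># N'"
        using less.prems(1,2) \<open>M = add_mset _ M'\<close> \<open>N = add_mset _ N'\<close> by auto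
      show "count_multiples M' m = count_multiples N' m" if "m > 0" for m
        using less.prems(3)[OF that] \<open>M = add_mset _ M'\<close> \<open>N = add_mset _ N'\<close> by simp
    qed
    ultimately show ?thesis by simp
  qed (use \<open>size M = size N\<close> in simp)
qed

lemma multiset_eq_if_sum_gcd_eq:
  fixes M N :: "nat multiset"
  assumes "0 \<notin># M" "0 \<notin># N" "\<And>k. k > 0 \<Longrightarrow> (\<Sum>d\<in>#M. gcd d k) = (\<Sum>d\<in>#N. gcd d k)"
  shows "M = N"
  by (rule multiset_eq_if_count_multiples_eq[OF assms(1,2) count_multiples_eq_if_sum_gcd_eq[OF assms(3)]])

section \<open>Cycle type and conjugacy\<close>

definition cycle_type :: "('a \<Rightarrow> 'a) \<Rightarrow> 'a set \<Rightarrow> nat multiset" where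
  "cycle_type p A = image_mset card (mset_set (orbits p A))"

lemma zero_not_in_cycle_type:
  assumes "permutation p" "finite A"
  shows "0 \<notin># cycle_type p A"
proof
  assume "0 \<in># cycle_type p A"
  then obtain y where "card (orbit p y) = 0"
    using \<open>finite A\<close> by (auto simp: cycle_type_def orbits_def)
  with card_orbit_pos[OF assms(1)] show False by (metis less_irrefl)
qed

lemma sum_mset_cycle_type: "(\<Sum>d\<in>#cycle_type p A. f d) = (\<Sum>C\<in>orbits p A. f (card C))"
  by (simp add: cycle_type_def sum_unfold_sum_mset image_mset.compositionality comp_def)

lemma cycle_type_eq_if_card_orbits_funpow_eq:
  assumes "permutation p" "p ` A \<subseteq> A" "finite A" "permutation q" "q ` B \<subseteq> B" "finite B"
    and "\<And>k. card (orbits (p ^^ k) A) = card (orbits (q ^^ k) B)"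
  shows "cycle_type p A = cycle_type q B"
proof (rule multiset_eq_if_sum_gcd_eq)
  show "0 \<notin># cycle_type p A" "0 \<notin># cycle_type q B"
    using assms by (simp_all add: zero_not_in_cycle_type)
  show "(\<Sum>d\<in>#cycle_type p A. gcd d k) = (\<Sum>d\<in>#cycle_type q B. gcd d k)" for k
    using assms(7)[of k]
    by (simp add: sum_mset_cycle_type card_orbits_funpow[OF assms(1-3)] card_orbits_funpow[OF assms(4-6)])
qed

lemma mem_orbit_if_image_mem_orbit: "permutation p \<Longrightarrow> p z \<in> orbit p x \<Longrightarrow> z \<in> orbit p x"
  by (metis orbit_eq_if_mem permutation_orbit_step permutation_self_in_orbit)

lemma image_Diff_orbit_subset:
  "permutation p \<Longrightarrow> p ` A \<subseteq> A \<Longrightarrow> p ` (A - orbit p x) \<subseteq> A - orbit p x"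
  using mem_orbit_if_image_mem_orbit by fastforce

lemma orbits_Diff_orbit:
  assumes "permutation p"
  shows "orbits p (A - orbit p x) = orbits p A - {orbit p x}"
  using orbit_eq_if_mem[OF assms] permutation_self_in_orbit[OF assms]
  unfolding orbits_def by blast

lemma cycle_type_Diff_orbit:
  assumes "permutation p" "finite A" "x \<in> A"
  shows "cycle_type p (A - orbit p x) = cycle_type p A - {#card (orbit p x)#}"
proof -
  have "orbit p x \<in># mset_set (orbits p A)"
    using assms(2,3) by (simp add: orbits_def)
  moreover have "mset_set (orbits p A - {orbit p x}) = mset_set (orbits p A) - {#orbit p x#}"
    using calculation assms(2) by (simp add: orbits_def mset_set_Diff)
  ultimately show ?thesis
    unfolding cycle_type_def orbits_Diff_orbit[OF assms(1)] by (simp add: image_mset_Diff)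
qed

lemma conjugate_orbits:
  assumes p: "permutation p" and q: "permutation q" and "card (orbit p x) = card (orbit q y)"
  obtains g where "bij_betw g (orbit p x) (orbit q y)" "\<And>z. z \<in> orbit p x \<Longrightarrow> g (p z) = q (g z)"
proof -
  have same_pattern: "(p ^^ i) x = (p ^^ j) x \<longleftrightarrow> (q ^^ i) y = (q ^^ j) y" for i j
    using funpow_eq_funpow_iff[OF p] funpow_eq_funpow_iff[OF q] assms(3)
    by (simp add: card_orbit p q)
  define g where "g z = (q ^^ funpow_dist p x z) y" for z
  have g_funpow: "g ((p ^^ i) x) = (q ^^ i) y" for i
  proof -
    have "(p ^^ i) x \<in> orbit p x"
      by (intro funpow_in_orbit permutation_self_in_orbit p)
    then have "(p ^^ funpow_dist p x ((p ^^ i) x)) x = (p ^^ i) x"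
      by (rule funpow_dist_prop)
    then show ?thesis unfolding g_def using same_pattern by blast
  qed
  have orbit_p: "orbit p x = range (\<lambda>i. (p ^^ i) x)"
    using orbit_altdef_permutation[OF p] by (simp add: full_SetCompr_eq)
  have orbit_q: "orbit q y = range (\<lambda>i. (q ^^ i) y)"
    using orbit_altdef_permutation[OF q] by (simp add: full_SetCompr_eq)
  have "bij_betw g (orbit p x) (orbit q y)"
    unfolding bij_betw_def inj_on_def orbit_p orbit_q
    using g_funpow same_pattern by (auto simp: image_iff)
  moreover have "g (p z) = q (g z)" if "z \<in> orbit p x" for z
  proof -
    obtain i where "z = (p ^^ i) x" using \<open>z \<in> orbit p x\<close> orbit_p by blast
    then have "g (p z) = g ((p ^^ Suc i) x)" by simp
    also have "\<dots> = q ((q ^^ i) y)" using g_funpow[of "Suc i"] by simp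
    also have "\<dots> = q (g z)" by (simp add: g_funpow \<open>z = (p ^^ i) x\<close>)
    finally show ?thesis .
  qed
  ultimately show thesis using that by blast
qed

lemma conjugating_bij_Un:
  assumes "bij_betw g1 C D" "\<And>z. z \<in> C \<Longrightarrow> g1 (p z) = q (g1 z)" "p ` C \<subseteq> C"
    and "bij_betw g2 C' D'" "\<And>z. z \<in> C' \<Longrightarrow> g2 (p z) = q (g2 z)" "p ` C' \<subseteq> C'"
    and "C \<inter> C' = {}" "D \<inter> D' = {}"
  obtains g where "bij_betw g (C \<union> C') (D \<union> D')" "\<And>z. z \<in> C \<union> C' \<Longrightarrow> g (p z) = q (g z)"
proof -
  define g where "g z = (if z \<in> C then g1 z else g2 z)" for z
  have "bij_betw g C D"
    by (rule bij_betw_cong[THEN iffD2, OF _ assms(1)]) (simp add: g_def)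
  moreover have "bij_betw g C' D'"
    by (rule bij_betw_cong[THEN iffD2, OF _ assms(4)]) (use assms(7) in \<open>auto simp: g_def\<close>)
  ultimately have "bij_betw g (C \<union> C') (D \<union> D')"
    using assms(8) by (rule bij_betw_combine)
  moreover have "g (p z) = q (g z)" if "z \<in> C \<union> C'" for z
    using that assms(2,3,5,6,7) by (auto simp: g_def)
  ultimately show thesis using that by blast
qed

lemma conjugate_if_cycle_type_eq:
  assumes p: "permutation p" and q: "permutation q"
  shows "p ` A \<subseteq> A \<Longrightarrow> q ` B \<subseteq> B \<Longrightarrow> finite A \<Longrightarrow> finite B \<Longrightarrow>
    cycle_type p A = cycle_type q B \<Longrightarrow> \<exists>g. bij_betw g A B \<and> (\<forall>z\<in>A. g (p z) = q (g z))"
proof (induction "card A" arbitrary: A B rule: less_induct)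
  case less
  show ?case
  proof (cases "A = {}")
    case True
    then have "orbits q B = {}"
      using less.prems(4,5) by (simp add: cycle_type_def orbits_def mset_set_empty_iff)
    then show ?thesis using True by (simp add: orbits_def bij_betw_def)
  next
    case False
    then obtain x where "x \<in> A" by blast
    let ?C = "orbit p x"
    have "card ?C \<in># cycle_type p A"
      using less.prems(3) \<open>x \<in> A\<close> by (simp add: cycle_type_def orbits_def)
    then have "card ?C \<in># cycle_type q B"
      using less.prems(5) by simp
    then obtain y where "y \<in> B" and same_card: "card (orbit q y) = card ?C"
      using less.prems(4) by (auto simp: cycle_type_def orbits_def)
    let ?D = "orbit q y"
    obtain g1 where g1: "bij_betw g1 ?C ?D" "\<And>z. z \<in> ?C \<Longrightarrow> g1 (p z) = q (g1 z)"
      using conjugate_orbits[OF p q same_card[symmetric]] by blast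
    have "?C \<subseteq> A" "?D \<subseteq> B"
      using orbit_subset_if_image_subset[OF less.prems(1) \<open>x \<in> A\<close>]
        orbit_subset_if_image_subset[OF less.prems(2) \<open>y \<in> B\<close>] by simp_all
    have "card (A - ?C) < card A"
      using \<open>x \<in> A\<close> less.prems(3) permutation_self_in_orbit[OF p]
      by (intro psubset_card_mono) auto
    moreover have "cycle_type p (A - ?C) = cycle_type q (B - ?D)"
      using less.prems(3-5) \<open>x \<in> A\<close> \<open>y \<in> B\<close> same_card
      by (simp add: cycle_type_Diff_orbit p q)
    ultimately have "\<exists>g. bij_betw g (A - ?C) (B - ?D) \<and> (\<forall>z\<in>A - ?C. g (p z) = q (g z))"
      using less.prems(1-4) image_Diff_orbit_subset[OF p] image_Diff_orbit_subset[OF q]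
      by (intro less.hyps) auto
    then obtain g2 where g2: "bij_betw g2 (A - ?C) (B - ?D)" "\<forall>z\<in>A - ?C. g2 (p z) = q (g2 z)"
      by blast
    have "?C \<union> (A - ?C) = A" "?D \<union> (B - ?D) = B"
      using \<open>?C \<subseteq> A\<close> \<open>?D \<subseteq> B\<close> by auto
    moreover obtain g where "bij_betw g (?C \<union> (A - ?C)) (?D \<union> (B - ?D))"
      "\<And>z. z \<in> ?C \<union> (A - ?C) \<Longrightarrow> g (p z) = q (g z)"
      by (rule conjugating_bij_Un[of g1 ?C ?D p q g2 "A - ?C" "B - ?D"])
        (use g1 g2 image_orbit[OF p] image_Diff_orbit_subset[OF p less.prems(1)] in auto)
    ultimately show ?thesis by auto
  qed
qed

lemma permutes_conjugate_if_cycle_type_eq: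
  assumes p: "p permutes A" and q: "q permutes A" and "finite A"
    and "cycle_type p A = cycle_type q A"
  shows "\<exists>g. g permutes A \<and> q = g \<circ> p \<circ> inv g"
proof -
  have "\<exists>g. bij_betw g A A \<and> (\<forall>z\<in>A. g (p z) = q (g z))"
    using permutes_image[OF p] permutes_image[OF q] \<open>finite A\<close> assms(4)
    by (intro conjugate_if_cycle_type_eq permutes_imp_permutation[OF \<open>finite A\<close>] p q) simp_all
  then obtain g where g: "bij_betw g A A" "\<forall>z\<in>A. g (p z) = q (g z)"
    by blast
  define h where "h z = (if z \<in> A then g z else z)" for z
  have h: "h permutes A"
    by (rule bij_imp_permutes[OF bij_betw_cong[THEN iffD2, OF _ g(1)]]) (simp_all add: h_def)
  have "h \<circ> p = q \<circ> h"
  proof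
    fix z
    show "(h \<circ> p) z = (q \<circ> h) z"
      using g(2) permutes_in_image[OF p] permutes_not_in[OF p] permutes_not_in[OF q]
      by (cases "z \<in> A") (simp_all add: h_def)
  qed
  then have "h \<circ> p \<circ> inv h = q \<circ> (h \<circ> inv h)"
    by (simp add: comp_assoc)
  also have "h \<circ> inv h = id"
    using permutes_inverses(1)[OF h] by (simp add: fun_eq_iff)
  finally have "q = h \<circ> p \<circ> inv h" by (metis comp_id)
  with h show ?thesis by blast
qed

section \<open>Traces of powers of the representation\<close>

lemma trace_mat_pow_even_subset_rep:
  assumes p: "p permutes {1..n}" and "odd n"
  shows "2 * mat_trace_on (even_subsets n) (mat_pow_on (even_subsets n) (even_subset_rep p) k)
    = of_nat (2 ^ card (orbits (p ^^ k) {1..n}))"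
proof -
  have pk: "(p ^^ k) permutes {1..n}" by (rule permutes_funpow[OF p])
  have "mat_trace_on (even_subsets n) (mat_pow_on (even_subsets n) (even_subset_rep p) k)
      = mat_trace_on (even_subsets n) (even_subset_rep (p ^^ k))"
    by (rule mat_trace_on_cong[OF mat_pow_on_even_subset_rep[OF finite_even_subsets
          permutes_image_in_even_subsets[OF p]]])
  also have "\<dots> = card {S \<in> even_subsets n. (p ^^ k) ` S = S}"
    by (rule mat_trace_on_even_subset_rep[OF finite_even_subsets])
  also have "{S \<in> even_subsets n. (p ^^ k) ` S = S}
      = {S \<in> invariant_subsets (p ^^ k) {1..n}. even (card S)}"
    by (auto simp: even_subsets_def invariant_subsets_def)
  finally have "2 * mat_trace_on (even_subsets n) (mat_pow_on (even_subsets n) (even_subset_rep p) k)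
      = of_nat (2 * card {S \<in> invariant_subsets (p ^^ k) {1..n}. even (card S)})"
    by simp
  also have "2 * card {S \<in> invariant_subsets (p ^^ k) {1..n}. even (card S)}
      = card (invariant_subsets (p ^^ k) {1..n})"
    using card_even_invariant_subsets[OF pk] \<open>odd n\<close> by simp
  also have "\<dots> = 2 ^ card (orbits (p ^^ k) {1..n})"
    using card_invariant_subsets[OF permutes_imp_permutation[OF _ pk]] permutes_image[OF pk] by simp
  finally show ?thesis .
qed

theorem theorem3p9:
  fixes n :: nat
  assumes "odd n"
  shows "\<not> unites_conj_classes n (even_subsets n) even_subset_rep"
proof
  assume "unites_conj_classes n (even_subsets n) even_subset_rep"
  then obtain \<sigma> \<tau> where \<sigma>: "\<sigma> permutes {1..n}" and \<tau>: "\<tau> permutes {1..n}"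
    and "\<not> conj_Sn n \<sigma> \<tau>"
    and similar: "similar_on (even_subsets n) (even_subset_rep \<sigma>) (even_subset_rep \<tau>)"
    unfolding unites_conj_classes_def by blast
  have "(2::nat) ^ card (orbits (\<sigma> ^^ k) {1..n}) = 2 ^ card (orbits (\<tau> ^^ k) {1..n})" for k
    using similar_on_trace_pow[OF finite_even_subsets similar, of k]
      trace_mat_pow_even_subset_rep[OF \<sigma> \<open>odd n\<close>, of k]
      trace_mat_pow_even_subset_rep[OF \<tau> \<open>odd n\<close>, of k]
    by (metis of_nat_eq_iff)
  moreover have "permutation \<sigma>" "permutation \<tau>"
    using permutes_imp_permutation[OF _ \<sigma>] permutes_imp_permutation[OF _ \<tau>] by simp_all
  ultimately have "cycle_type \<sigma> {1..n} = cycle_type \<tau> {1..n}"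
    using permutes_image[OF \<sigma>] permutes_image[OF \<tau>]
    by (intro cycle_type_eq_if_card_orbits_funpow_eq) auto
  then have "conj_Sn n \<sigma> \<tau>"
    unfolding conj_Sn_def using permutes_conjugate_if_cycle_type_eq[OF \<sigma> \<tau>] by simp
  with \<open>\<not> conj_Sn n \<sigma> \<tau>\<close> show False by contradiction
qed

end
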